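(* Let $X$ be a connected metric space, $\mathcal M=\{M_1,\dots,M_n\}\subset\mathcal P^f_{\mathrm{Cl}}(X)$, $\Sigma(\mathcal M)\neq\emptyset$ and $d=(d_1,\dots,d_n)\in\Omega(\mathcal M)$. Then there exists $i$ with $d_i=\sup_{x\in K_d}|x\,M_i|$.
   Context: For a metric space $X$, $p\in X$, $A\subset X$: $|p\,A|=\inf_{a\in A}|p\,a|$ ($=\infty$ if $A=\emptyset$); for $0\le r<\infty$, $B_r(A)=\{p:|p\,A|\le r\}$. For nonempty $A,B$, $d_H(A,B)=\max\{\sup_{a\in A}|a\,B|,\sup_{b\in B}|b\,A|\}\in[0,\infty]$. $\mathcal P_{\mathrm{Cl}}(X)$ is the set of nonempty closed subsets of $X$ with $d_H$. A finiteness class of $\mathcal P_{\mathrm{Cl}}(X)$ is an equivalence class of the relation $A\sim B\iff d_H(A,B)<\infty$; $\mathcal P^f_{\mathrm{Cl}}(X)$ denotes a fixed finiteness class. For finite $\mathcal M=\{M_1,\dots,M_n\}\subset\mathcal P^f_{\mathrm{Cl}}(X)$, set $S_{\mathcal M}(Y)=\sum_{i=1}^n d_H(Y,M_i)$ for $Y\in\mathcal P^f_{\mathrm{Cl}}(X)$; $\Sigma(\mathcal M)$ is the set of all minimizers of $S_{\mathcal M}$ over $\mathcal P^f_{\mathrm{Cl}}(X)$. For $K\in\Sigma(\mathcal M)$, $d(K)=(d_H(K,M_1),\dots,d_H(K,M_n))$; $\Omega(\mathcal M)=\{d(K):K\in\Sigma(\mathcal M)\}$; for $d=(d_1,\dots,d_n)\in\Omega(\mathcal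 M)$, $\Sigma_d(\mathcal M)=\{K\in\Sigma(\mathcal M):d(K)=d\}$, partially ordered by inclusion; and $K_d=\bigcap_{i=1}^n B_{d_i}(M_i)$. *)

theory Defs
  imports "HOL-Analysis.Analysis"
begin

text \<open>Distance from a point to a set, with value \<infinity> for the empty set.\<close>
definition ptdist :: "'a::metric_space \<Rightarrow> 'a set \<Rightarrow> ereal" where
  "ptdist p A = (INF a\<in>A. ereal (dist p a))"

definition nbhd :: "ereal \<Rightarrow> 'a::metric_space set \<Rightarrow> 'a set" where
  "nbhd r A = {p. ptdist p A \<le> r}"

definition hdist :: "'a::metric_space set \<Rightarrow> 'a set \<Rightarrow> ereal" where
  "hdist A B = max (SUP a\<in>A. ptdist a B) (SUP b\<in>B. ptdist b A)"

definition PCl :: "'a::metric_space set set" where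
  "PCl = {A. closed A \<and> A \<noteq> {}}"

definition finiteness_class :: "'a::metric_space set set \<Rightarrow> bool" where
  "finiteness_class F \<longleftrightarrow> (\<exists>A0\<in>PCl. F = {B\<in>PCl. hdist A0 B < \<infinity>})"

definition SM :: "(nat \<Rightarrow> 'a::metric_space set) \<Rightarrow> nat \<Rightarrow> 'a set \<Rightarrow> ereal" where
  "SM M n Y = (\<Sum>i\<in>{1..n}. hdist Y (M i))"

definition Sigma_min :: "'a::metric_space set set \<Rightarrow> (nat \<Rightarrow> 'a set) \<Rightarrow> nat \<Rightarrow> 'a set set" where
  "Sigma_min F M n = {K\<in>F. \<forall>Y\<in>F. SM M n K \<le> SM M n Y}"

text \<open>Omega(M), vectors represented as functions on {1..n} (values outside are irrelevant).\<close>
definition Omega :: "'a::metric_space set set \<Rightarrow> (nat \<Rightarrow> 'a set) \<Rightarrow> nat \<Rightarrow> (nat \<Rightarrow> ereal) set" where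
  "Omega F M n = {d. \<exists>K\<in>Sigma_min F M n. \<forall>i\<in>{1..n}. d i = hdist K (M i)}"

definition Kd :: "(nat \<Rightarrow> 'a::metric_space set) \<Rightarrow> nat \<Rightarrow> (nat \<Rightarrow> ereal) \<Rightarrow> 'a set" where
  "Kd M n d = (\<Inter>i\<in>{1..n}. nbhd (d i) (M i))"

end

theory Submission
  imports Defs
begin

text \<open>Suppose that sup {|x M_i| : x \<in> K_d} < d_i for every i. Then the closed set
  K_d = {x. |x M_i| \<le> d_i for all i} equals the open set obtained by making all its
  inequalities strict; it contains a minimizer, so it is nonempty, and by connectedness it is
  the whole space X. But then X lies in the finiteness class and
  d_H(X, M_i) = sup {|x M_i| : x \<in> X} < d_i for every i, so X has a strictly smaller
  sum of distances than the minimizer.\<close>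

lemma ptdist_nonneg: "0 \<le> ptdist x A"
  unfolding ptdist_def by (auto intro: INF_greatest)

lemma ptdist_eq_infdist: "A \<noteq> {} \<Longrightarrow> ptdist x A = ereal (infdist x A)"
  unfolding ptdist_def infdist_notempty
  by (subst ereal_Inf') (auto simp: image_comp)

lemma ptdist_triangle:
  assumes "B \<noteq> {}" "C \<noteq> {}"
  shows "ptdist a C \<le> ptdist a B + (SUP b\<in>B. ptdist b C)"
proof -
  let ?s = "SUP b\<in>B. ptdist b C"
  have s_nonneg: "0 \<le> ?s"
    using assms(1) ptdist_nonneg by (metis SUP_upper2 ex_in_conv)
  have "ptdist a C \<le> ereal (dist a b) + ?s" if "b \<in> B" for b
  proof -
    have "ptdist a C \<le> ereal (dist a b) + ptdist b C"
      using infdist_triangle[of a C b] by (simp add: ptdist_eq_infdist[OF assms(2)] add.commute)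
    also have "\<dots> \<le> ereal (dist a b) + ?s"
      using that by (intro add_left_mono SUP_upper)
    finally show ?thesis .
  qed
  then have "ptdist a C \<le> (INF b\<in>B. ereal (dist a b) + ?s)"
    by (rule INF_greatest)
  also have "\<dots> = (INF b\<in>B. ereal (dist a b)) + ?s"
    using assms(1) s_nonneg by (intro INF_ereal_add_left) auto
  finally show ?thesis
    unfolding ptdist_def[of a B] .
qed

lemma ptdist_le_hdist: "a \<in> A \<Longrightarrow> ptdist a B \<le> hdist A B"
  unfolding hdist_def by (meson SUP_upper max.coboundedI1)

lemma hdist_commute: "hdist A B = hdist B A"
  unfolding hdist_def by (simp add: max.commute)

lemma SUP_ptdist_le_hdist: "(SUP a\<in>A. ptdist a B) \<le> hdist A B"
  unfolding hdist_def by simp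

lemma hdist_triangle:
  assumes "A \<noteq> {}" "B \<noteq> {}" "C \<noteq> {}"
  shows "hdist A C \<le> hdist A B + hdist B C"
proof -
  have "ptdist a C \<le> hdist A B + hdist B C" if "a \<in> A" for a
    using ptdist_triangle[OF assms(2,3), of a] ptdist_le_hdist[OF that, of B]
      SUP_ptdist_le_hdist[where A=B and B=C]
    by (meson add_mono order_trans)
  moreover have "ptdist c A \<le> hdist A B + hdist B C" if "c \<in> C" for c
    using ptdist_triangle[OF assms(2,1), of c] ptdist_le_hdist[OF that, of B]
      SUP_ptdist_le_hdist[where A=B and B=A]
    by (metis add.commute add_mono hdist_commute order_trans)
  ultimately show ?thesis
    unfolding hdist_def[of A C] by (auto intro: SUP_least)
qed

lemma hdist_UNIV:
  assumes "B \<noteq> {}"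
  shows "hdist UNIV B = (SUP x. ptdist x B)"
proof -
  have "0 \<le> (SUP x. ptdist x B)"
    by (meson SUP_upper2 UNIV_I ptdist_nonneg)
  moreover have "(SUP b\<in>B. ptdist b UNIV) = 0"
    using assms by (simp add: ptdist_eq_infdist)
  ultimately show ?thesis
    unfolding hdist_def by simp
qed

lemma finiteness_class_subset_PCl: "finiteness_class F \<Longrightarrow> F \<subseteq> PCl"
  unfolding finiteness_class_def by auto

lemma finiteness_class_hdist_less_top:
  assumes "finiteness_class F" "A \<in> F" "B \<in> F"
  shows "hdist A B < \<infinity>"
proof -
  obtain A0 where A0: "A0 \<in> PCl" "F = {B\<in>PCl. hdist A0 B < \<infinity>}"
    using assms(1) unfolding finiteness_class_def by blast
  have "hdist A B \<le> hdist A A0 + hdist A0 B"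
    using A0 assms(2,3) unfolding PCl_def by (intro hdist_triangle) auto
  also have "\<dots> < \<infinity>"
    using A0 assms(2,3) hdist_commute[of A A0] by simp
  finally show ?thesis .
qed

lemma finiteness_class_memI:
  assumes "finiteness_class F" "A \<in> F" "B \<in> PCl" "hdist A B < \<infinity>"
  shows "B \<in> F"
proof -
  obtain A0 where A0: "A0 \<in> PCl" "F = {B\<in>PCl. hdist A0 B < \<infinity>}"
    using assms(1) unfolding finiteness_class_def by blast
  have "hdist A0 B \<le> hdist A0 A + hdist A B"
    using A0 assms(2,3) unfolding PCl_def by (intro hdist_triangle) auto
  also have "\<dots> < \<infinity>"
    using A0 assms(2,4) by simp
  finally show ?thesis
    using A0 assms(3) by simp
qed

lemma UNIV_in_finiteness_class:
  assumes "finiteness_class F" "A \<in> F" "hdist UNIV A < \<infinity>"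
  shows "UNIV \<in> F"
  using finiteness_class_memI[OF assms(1,2), of UNIV] assms(3) by (simp add: PCl_def hdist_commute)

lemma sublevel_set_eq_UNIV_if_strict:
  fixes f :: "'i \<Rightarrow> 'a::topological_space \<Rightarrow> real"
  assumes "connected (UNIV :: 'a set)" "finite I" "\<And>i. i \<in> I \<Longrightarrow> continuous_on UNIV (f i)"
    and "{x. \<forall>i\<in>I. f i x \<le> r i} \<noteq> {}"
    and "\<And>x i. \<forall>j\<in>I. f j x \<le> r j \<Longrightarrow> i \<in> I \<Longrightarrow> f i x < r i"
  shows "{x. \<forall>i\<in>I. f i x \<le> r i} = UNIV"
proof -
  let ?S = "{x. \<forall>i\<in>I. f i x \<le> r i}"
  have "?S = (\<Inter>i\<in>I. {x. f i x \<le> r i})"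
    by blast
  then have "closed ?S"
    using assms(3) by (auto intro!: closed_INT closed_Collect_le continuous_on_const)
  have "?S = (\<Inter>i\<in>I. {x. f i x < r i})"
    using assms(5) by (blast intro: less_imp_le)
  then have "open ?S"
    using assms(2,3) by (auto intro!: open_INT open_Collect_less continuous_on_const)
  have "?S = {} \<or> - ?S = {}"
    using connectedD[OF assms(1) \<open>open ?S\<close>, of "- ?S"] \<open>closed ?S\<close>
    by (simp add: closed_def)
  then show ?thesis
    using assms(4) by blast
qed

lemma subset_Kd_if_hdist_eq:
  assumes "\<forall>i\<in>{1..n}. d i = hdist K (M i)"
  shows "K \<subseteq> Kd M n d"
  unfolding Kd_def nbhd_def using assms ptdist_le_hdist by fastforce

lemma SUP_ptdist_Kd_le: "i \<in> {1..n} \<Longrightarrow> (SUP x\<in>Kd M n d. ptdist x (M i)) \<le> d i"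
  unfolding Kd_def nbhd_def by (auto intro: SUP_least)

lemma Kd_eq_UNIV_if_SUP_less:
  fixes M :: "nat \<Rightarrow> 'a::metric_space set"
  assumes "connected (UNIV :: 'a set)" "\<forall>i\<in>{1..n}. M i \<noteq> {}"
    and "\<forall>i\<in>{1..n}. d i < \<infinity>" "Kd M n d \<noteq> {}"
    and "\<forall>i\<in>{1..n}. (SUP x\<in>Kd M n d. ptdist x (M i)) < d i"
  shows "Kd M n d = UNIV"
proof -
  define r where "r i = real_of_ereal (d i)" for i
  have d_eq: "d i = ereal (r i)" if "i \<in> {1..n}" for i
  proof -
    obtain x where "x \<in> Kd M n d"
      using assms(4) by blast
    then have "ptdist x (M i) \<le> d i"
      using that unfolding Kd_def nbhd_def by blast
    then have "0 \<le> d i"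
      using ptdist_nonneg order_trans by blast
    then show ?thesis
      using assms(3) that unfolding r_def by (cases "d i") auto
  qed
  have Kd_eq: "Kd M n d = {x. \<forall>i\<in>{1..n}. infdist x (M i) \<le> r i}"
    unfolding Kd_def nbhd_def using assms(2) d_eq by (auto simp: ptdist_eq_infdist)
  have strict: "infdist x (M i) < r i"
    if "\<forall>j\<in>{1..n}. infdist x (M j) \<le> r j" "i \<in> {1..n}" for x i
  proof -
    have "x \<in> Kd M n d"
      using that(1) Kd_eq by blast
    then have "ptdist x (M i) \<le> (SUP x\<in>Kd M n d. ptdist x (M i))"
      by (rule SUP_upper)
    also have "\<dots> < d i"
      using assms(5) that(2) by blast
    finally show ?thesis
      using assms(2) d_eq that(2) by (simp add: ptdist_eq_infdist)
  qed
  show ?thesis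
    unfolding Kd_eq using assms(4)
    by (intro sublevel_set_eq_UNIV_if_strict[where f = "\<lambda>i x. infdist x (M i)", OF assms(1)])
      (auto simp: Kd_eq continuous_on_infdist strict)
qed

lemma sum_strict_mono_ereal:
  fixes a b :: "'i \<Rightarrow> ereal"
  assumes "finite I" "I \<noteq> {}" "\<And>i. i \<in> I \<Longrightarrow> a i < b i"
  shows "sum a I < sum b I"
  using assms by (induction I rule: finite_ne_induct) (auto intro: ereal_add_strict_mono2)

theorem mainTheorem20:
  fixes F :: "'a::metric_space set set" and M :: "nat \<Rightarrow> 'a set" and n :: nat
    and d :: "nat \<Rightarrow> ereal"
  assumes "connected (UNIV :: 'a set)"
    and "finiteness_class F"
    and "n \<ge> 1"
    and "\<forall>i\<in>{1..n}. M i \<in> F"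
    and "Sigma_min F M n \<noteq> {}"
    and "d \<in> Omega F M n"
  shows "\<exists>i\<in>{1..n}. d i = (SUP x\<in>Kd M n d. ptdist x (M i))"
proof (rule ccontr)
  assume SUP_ne: "\<not> ?thesis"
  obtain K where K_min: "K \<in> Sigma_min F M n" and d_eq: "\<forall>i\<in>{1..n}. d i = hdist K (M i)"
    using assms(6) unfolding Omega_def by blast
  have K_F: "K \<in> F"
    using K_min unfolding Sigma_min_def by blast
  have K_le: "SM M n K \<le> SM M n UNIV" if "UNIV \<in> F"
    using K_min that unfolding Sigma_min_def by blast
  have K_ne: "K \<noteq> {}" and M_ne: "\<forall>i\<in>{1..n}. M i \<noteq> {}"
    using finiteness_class_subset_PCl[OF assms(2)] K_F assms(4) unfolding PCl_def by auto
  have d_fin: "\<forall>i\<in>{1..n}. d i < \<infinity>"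
    using d_eq finiteness_class_hdist_less_top[OF assms(2) K_F] assms(4) by simp
  have SUP_less: "\<forall>i\<in>{1..n}. (SUP x\<in>Kd M n d. ptdist x (M i)) < d i"
    using SUP_ne SUP_ptdist_Kd_le by (metis order.not_eq_order_implies_strict)
  then have "Kd M n d = UNIV"
    using Kd_eq_UNIV_if_SUP_less assms(1) M_ne d_fin subset_Kd_if_hdist_eq[OF d_eq] K_ne by blast
  then have hdist_less: "\<forall>i\<in>{1..n}. hdist UNIV (M i) < d i"
    using SUP_less M_ne by (simp add: hdist_UNIV)
  have "UNIV \<in> F"
    using UNIV_in_finiteness_class[OF assms(2), of "M 1"] assms(3,4) hdist_less d_fin
    by (metis atLeastAtMost_iff order.refl order.strict_trans)
  moreover have "SM M n UNIV < SM M n K"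
    unfolding SM_def using assms(3) hdist_less d_eq by (intro sum_strict_mono_ereal) auto
  ultimately show False
    using K_le by (simp add: not_le[symmetric])
qed

end
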